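(* Let $P$ be a convexly independent finite point set in the plane, let $G=(P,E)$ be a locally Gabriel graph on $P$, and let $p_1,p_2\in P$ be antipodal. Construct $U,V,E_1,E_2,G'_1,G'_2$ as described in the context (for any admissible choice of the assignment of edges to $E_1$ or $E_2$). Then both $G'_1$ and $G'_2$ are path restricted ordered bipartite graphs.
   Context: A finite point set $P\subset\mathbb{R}^2$ is convexly independent if no point of $P$ lies in the convex hull of the others. $G=(P,E)$ is a locally Gabriel graph if two edges $\{u,v\},\{u,w\}\in E$ sharing an endpoint $u$ can coexist only if $\angle uwv<\pi/2$ and $\angle uvw<\pi/2$ (equivalently, for each edge $\{u,v\}$ the disk with diameter $\overline{uv}$ contains no other neighbor of $u$ or $v$). Points $p_1,p_2\in P$ are antipodal if there are parallel lines through $p_1$ and $p_2$ with all of $P$ between them. Construction: let $U$ and $V$ be the sets of points of $P\setminus\{p_1,p_2\}$ lying on the two (open) sides of the line $p_1p_2$. Traversing each of the two boundary chains of the convex hull from $p_1$ to $p_2$, list $U=\{u_1,\dots,u_{n_1}\}$ and $V=\{v_1,\dots,v_{n_2}\}$ in order of appearance, and order them by $u_i<u_k\iff i<k$, $v_j<v_l\iff j<l$; put $v_0:=p_1$, $v_{n_2+1}:=p_2$. Let $E'$ be the set of edges of $G$ with one endpoint in $U$ and one in $V$. For $(u_i,v_j)\in E'$ at least one of $\angle u_iv_jv_{j-1}$, $\angle u_iv_jv_{j+1}$ is less than $\pi/2$; put the edge in $E_1$ if $\angle u_iv_jv_{j-1}<\pi/2$, in $E_2$ if $\angle u_iv_jv_{j+1}<\pi/2$,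 and into either one (arbitrarily) if both hold. $G_1=(U,V,E_1)$ carries the orders above; $G'_1$ is obtained from $G_1$ by deleting, for each $v\in V$ having at least one $E_1$-edge, the $E_1$-edge joining $v$ to its largest neighbor in $U$. $G_2=(U,V,E_2)$ carries the reversed orders on $U$ and on $V$; $G'_2$ is obtained from $G_2$ by deleting, for each $v\in V$ having at least one $E_2$-edge, the $E_2$-edge joining $v$ to its largest neighbor in $U$ with respect to the reversed order. Path restricted ordered bipartite graph: an ordered bipartite graph $(U,V,E)$ (disjoint totally ordered finite sets, $E\subseteq U\times V$) is path restricted if there is no forward path $w_0,\dots,w_m$ (distinct vertices alternating between $U$ and $V$, consecutive ones adjacent, with the $U$-vertices strictly increasing and the $V$-vertices strictly increasing along the sequence) together with an edge $\{w_0,x\}\in E$ such that $x$ lies in the part not containing $w_0$ and $w_1<x\le M$, where $M$ is the largest vertex of the path in that part (such an edge is called a back edge). *)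

theory Defs
  imports "HOL-Analysis.Analysis"
begin

type_synonym pt = "real \<times> real"

definition angle3 :: "pt \<Rightarrow> pt \<Rightarrow> pt \<Rightarrow> real" where
  "angle3 a b c = arccos (inner (a - b) (c - b) / (norm (a - b) * norm (c - b)))"

definition cross :: "pt \<Rightarrow> pt \<Rightarrow> real" where
  "cross x y = fst x * snd y - snd x * fst y"

definition convexly_independent :: "pt set \<Rightarrow> bool" where
  "convexly_independent P \<longleftrightarrow> (\<forall>p\<in>P. p \<notin> convex hull (P - {p}))"

definition is_graph :: "pt set \<Rightarrow> pt set set \<Rightarrow> bool" where
  "is_graph P E \<longleftrightarrow> E \<subseteq> {{a, b} | a b. a \<in> P \<and> b \<in> P \<and> a \<noteq> b}"

definition locally_gabriel :: "pt set \<Rightarrow> pt set set \<Rightarrow> bool" where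
  "locally_gabriel P E \<longleftrightarrow> is_graph P E \<and>
     (\<forall>u v w. {u, v} \<in> E \<and> {u, w} \<in> E \<and> v \<noteq> w \<longrightarrow>
        angle3 u w v < pi / 2 \<and> angle3 u v w < pi / 2)"

text \<open>Parallel lines through p1 and p2 (orthogonal to n) with all of P between them.\<close>
definition antipodal :: "pt set \<Rightarrow> pt \<Rightarrow> pt \<Rightarrow> bool" where
  "antipodal P p1 p2 \<longleftrightarrow> p1 \<in> P \<and> p2 \<in> P \<and>
     (\<exists>n. n \<noteq> 0 \<and> (\<forall>q\<in>P. inner n p1 \<le> inner n q \<and> inner n q \<le> inner n p2))"

definition hull_edge :: "pt set \<Rightarrow> pt \<Rightarrow> pt \<Rightarrow> bool" where
  "hull_edge P a b \<longleftrightarrow> a \<noteq> b \<and>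
     (\<exists>n. n \<noteq> 0 \<and> inner n a = inner n b \<and> (\<forall>q\<in>P. inner n q \<le> inner n a))"

definition boundary_chain :: "pt set \<Rightarrow> pt list \<Rightarrow> bool" where
  "boundary_chain P L \<longleftrightarrow> distinct L \<and> set L \<subseteq> P \<and>
     (\<forall>i. Suc i < length L \<longrightarrow> hull_edge P (L ! i) (L ! Suc i))"

definition list_less :: "'a list \<Rightarrow> 'a \<Rightarrow> 'a \<Rightarrow> bool" where
  "list_less xs a b \<longleftrightarrow> (\<exists>i j. i < j \<and> j < length xs \<and> xs ! i = a \<and> xs ! j = b)"

definition strict_total_on :: "'a set \<Rightarrow> ('a \<Rightarrow> 'a \<Rightarrow> bool) \<Rightarrow> bool" where
  "strict_total_on A lt \<longleftrightarrow>
     (\<forall>x\<in>A. \<not> lt x x) \<and>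
     (\<forall>x\<in>A. \<forall>y\<in>A. \<forall>z\<in>A. lt x y \<and> lt y z \<longrightarrow> lt x z) \<and>
     (\<forall>x\<in>A. \<forall>y\<in>A. x \<noteq> y \<longrightarrow> lt x y \<or> lt y x)"

definition ordered_bipartite :: "'a set \<Rightarrow> 'a set \<Rightarrow> ('a \<Rightarrow> 'a \<Rightarrow> bool) \<Rightarrow> ('a \<Rightarrow> 'a \<Rightarrow> bool)
    \<Rightarrow> ('a \<times> 'a) set \<Rightarrow> bool" where
  "ordered_bipartite U V ltU ltV E \<longleftrightarrow> finite U \<and> finite V \<and> U \<inter> V = {} \<and> E \<subseteq> U \<times> V \<and>
     strict_total_on U ltU \<and> strict_total_on V ltV"

definition badj :: "('a \<times> 'a) set \<Rightarrow> 'a \<Rightarrow> 'a \<Rightarrow> bool" where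
  "badj E a b \<longleftrightarrow> (a, b) \<in> E \<or> (b, a) \<in> E"

definition part_lt :: "'a set \<Rightarrow> ('a \<Rightarrow> 'a \<Rightarrow> bool) \<Rightarrow> ('a \<Rightarrow> 'a \<Rightarrow> bool) \<Rightarrow> 'a \<Rightarrow> 'a \<Rightarrow> bool" where
  "part_lt U ltU ltV a b = (if a \<in> U then ltU a b else ltV a b)"

definition same_part :: "'a set \<Rightarrow> 'a set \<Rightarrow> 'a \<Rightarrow> 'a \<Rightarrow> bool" where
  "same_part U V a b \<longleftrightarrow> (a \<in> U \<and> b \<in> U) \<or> (a \<in> V \<and> b \<in> V)"

definition forward_path :: "'a set \<Rightarrow> 'a set \<Rightarrow> ('a \<Rightarrow> 'a \<Rightarrow> bool) \<Rightarrow> ('a \<Rightarrow> 'a \<Rightarrow> bool)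
    \<Rightarrow> ('a \<times> 'a) set \<Rightarrow> 'a list \<Rightarrow> bool" where
  "forward_path U V ltU ltV E ws \<longleftrightarrow> 2 \<le> length ws \<and> distinct ws \<and>
     (\<forall>i. Suc i < length ws \<longrightarrow>
        ((ws ! i \<in> U \<and> ws ! Suc i \<in> V) \<or> (ws ! i \<in> V \<and> ws ! Suc i \<in> U)) \<and>
        badj E (ws ! i) (ws ! Suc i)) \<and>
     (\<forall>i j. i < j \<and> j < length ws \<and> ws ! i \<in> U \<and> ws ! j \<in> U \<longrightarrow> ltU (ws ! i) (ws ! j)) \<and>
     (\<forall>i j. i < j \<and> j < length ws \<and> ws ! i \<in> V \<and> ws ! j \<in> V \<longrightarrow> ltV (ws ! i) (ws ! j))"

text \<open>A back edge of the forward path ws: an edge {w_0, x} with x in the part not containing w_0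
  and w_1 < x <= M, M the largest path vertex in that part (x <= M iff x <= some path
  vertex of that part).\<close>
definition back_edge :: "'a set \<Rightarrow> 'a set \<Rightarrow> ('a \<Rightarrow> 'a \<Rightarrow> bool) \<Rightarrow> ('a \<Rightarrow> 'a \<Rightarrow> bool)
    \<Rightarrow> ('a \<times> 'a) set \<Rightarrow> 'a list \<Rightarrow> 'a \<Rightarrow> bool" where
  "back_edge U V ltU ltV E ws x \<longleftrightarrow> badj E (ws ! 0) x \<and>
     (if ws ! 0 \<in> U then x \<in> V else x \<in> U) \<and>
     part_lt U ltU ltV (ws ! 1) x \<and>
     (\<exists>k < length ws. same_part U V (ws ! k) x \<and>
        (x = ws ! k \<or> part_lt U ltU ltV x (ws ! k)))"

definition path_restricted :: "'a set \<Rightarrow> 'a set \<Rightarrow> ('a \<Rightarrow> 'a \<Rightarrow> bool) \<Rightarrow> ('a \<Rightarrow> 'a \<Rightarrow> bool)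
    \<Rightarrow> ('a \<times> 'a) set \<Rightarrow> bool" where
  "path_restricted U V ltU ltV E \<longleftrightarrow> ordered_bipartite U V ltU ltV E \<and>
     \<not> (\<exists>ws x. forward_path U V ltU ltV E ws \<and> back_edge U V ltU ltV E ws x)"

text \<open>For each v having at least one edge in F, delete the edge joining v to its largest
  (w.r.t. ltU) neighbour: an edge (u,v) survives iff v has a neighbour larger than u.\<close>
definition delete_max_edges :: "('a \<Rightarrow> 'a \<Rightarrow> bool) \<Rightarrow> ('a \<times> 'a) set \<Rightarrow> ('a \<times> 'a) set" where
  "delete_max_edges ltU F = {(u, v) \<in> F. \<exists>u'. (u', v) \<in> F \<and> ltU u u'}"

end

theory Submission
  imports Defs
begin

text \<open>
  Read the hull boundary as the convex polygon p1, u_1, ..., u_n1, p2, v_n2, ..., v_1. A forward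
  path of G'_1 together with a back edge produces four vertices in this cyclic order and, at each
  of them, an acute angle containing the corresponding angle of the quadrilateral they span: the
  locally Gabriel condition makes the angle between two edges at a common vertex acute, the choice
  of E_1 makes the angle at v_j towards v_(j-1) acute, and the deleted maximal edges supply one more
  neighbour beyond the end of the path. Shrinking an acute angle at a vertex of a convex polygon
  keeps it acute, so the convex quadrilateral would have four acute angles, contradicting their sum
  2 pi. The statement for G'_2 is the one for G'_1 after reversing both chains.
\<close>

section \<open>Orientation and acute angles\<close>

definition orient :: "pt \<Rightarrow> pt \<Rightarrow> pt \<Rightarrow> real" where
  "orient a b c = cross (b - a) (c - a)"

lemma orient_rotate: "orient b c a = orient a b c"
  by (cases a; cases b; cases c) (simp add: orient_def cross_def algebra_simps)

lemma orient_swap: "orient b a c = - orient a b c"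
  by (cases a; cases b; cases c) (simp add: orient_def cross_def algebra_simps)

lemma orient_swap23: "orient a c b = - orient a b c"
  by (cases a; cases b; cases c) (simp add: orient_def cross_def algebra_simps)

lemma cross_self [simp]: "cross u u = 0"
  by (simp add: cross_def)

lemma orient_repeated [simp]: "orient a a b = 0" "orient a b a = 0" "orient a b b = 0"
  by (simp_all add: orient_def cross_def)

lemma inner_pos_if_angle3_lt_pi_half:
  assumes "angle3 a b c < pi / 2"
  shows "inner (a - b) (c - b) > 0"
proof -
  define t where "t = inner (a - b) (c - b) / (norm (a - b) * norm (c - b))"
  have "\<bar>inner (a - b) (c - b)\<bar> \<le> norm (a - b) * norm (c - b)"
    by (rule Cauchy_Schwarz_ineq2)
  then have "\<bar>t\<bar> \<le> 1"
    unfolding t_def by (cases "norm (a - b) * norm (c - b) = 0") (auto simp: abs_divide)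
  moreover have "arccos t < arccos 0"
    using assms by (simp add: angle3_def t_def)
  ultimately have "t > 0"
    using arccos_less_mono[of t 0] by simp
  moreover have "norm (a - b) * norm (c - b) \<ge> 0"
    by simp
  ultimately show ?thesis
    unfolding t_def by (auto simp: zero_less_divide_iff)
qed

lemma inner_cross_identities:
  fixes u v w :: pt
  shows "inner u v * cross u w = cross u v * inner u w + cross v w * inner u u"
    and "inner v w * cross u w = cross v w * inner u w + cross u v * inner w w"
  by (cases u; cases v; cases w; simp add: cross_def inner_real_def algebra_simps)+

lemma inner_pos_inside_acute_angle:
  fixes x a b d :: pt
  assumes "s * orient x a b > 0" "s * orient x b d > 0" "s * orient x a d > 0"
    and "inner (a - x) (d - x) > 0"
  shows "inner (a - x) (b - x) > 0" "inner (b - x) (d - x) > 0"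
proof -
  note identities = inner_cross_identities[where u = "a - x" and v = "b - x" and w = "d - x", folded orient_def]
  have "(s * orient x a b) * inner (a - x) (d - x) + (s * orient x b d) * inner (a - x) (a - x) > 0"
    using assms by (intro add_pos_nonneg) auto
  then have "inner (a - x) (b - x) * (s * orient x a d) > 0"
    using arg_cong[OF identities(1), of "\<lambda>t. s * t"] by (simp only: distrib_left mult.left_commute)
  then show "inner (a - x) (b - x) > 0"
    using assms(3) by (simp add: zero_less_mult_iff)
  have "(s * orient x b d) * inner (a - x) (d - x) + (s * orient x a b) * inner (d - x) (d - x) > 0"
    using assms by (intro add_pos_nonneg) auto
  then have "inner (b - x) (d - x) * (s * orient x a d) > 0"
    using arg_cong[OF identities(2), of "\<lambda>t. s * t"] by (simp only: distrib_left mult.left_commute)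
  then show "inner (b - x) (d - x) > 0"
    using assms(3) by (simp add: zero_less_mult_iff)
qed

lemma convex_quadrilateral_not_all_acute:
  fixes a b c d :: pt
  assumes "s * orient a b c > 0" "s * orient a b d > 0" "s * orient a c d > 0" "s * orient b c d > 0"
    and "inner (b - a) (d - a) > 0" "inner (a - b) (c - b) > 0"
    and "inner (b - c) (d - c) > 0" "inner (c - d) (a - d) > 0"
  shows False
proof -
  \<comment> \<open>each corner weighted by the area of the triangle of the other three corners\<close>
  have identity: "orient b c d * inner (b - a) (d - a) + orient a c d * inner (a - b) (c - b)
      + orient a b d * inner (b - c) (d - c) + orient a b c * inner (c - d) (a - d) = 0"
    by (cases a; cases b; cases c; cases d) (simp add: orient_def cross_def inner_real_def algebra_simps)
  have "(s * orient b c d) * inner (b - a) (d - a) + (s * orient a c d) * inner (a - b) (c - b)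
      + (s * orient a b d) * inner (b - c) (d - c) + (s * orient a b c) * inner (c - d) (a - d) = 0"
    using arg_cong[OF identity, of "\<lambda>t. s * t"] by (simp only: distrib_left mult.assoc mult_zero_right)
  moreover have "(s * orient b c d) * inner (b - a) (d - a) + (s * orient a c d) * inner (a - b) (c - b)
      + (s * orient a b d) * inner (b - c) (d - c) + (s * orient a b c) * inner (c - d) (a - d) > 0"
    using assms by (simp add: add_pos_pos)
  ultimately show False
    by simp
qed

lemma cross_eq_0_imp_parallel:
  fixes u v :: pt
  assumes "cross u v = 0" "u \<noteq> 0"
  shows "v = (inner u v / inner u u) *\<^sub>R u"
proof -
  have "inner u u \<noteq> 0"
    using assms(2) by simp
  then show ?thesis
    using assms(1) by (cases u; cases v) (auto simp: cross_def inner_real_def field_simps)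
qed

lemma orient_neq_0_if_convexly_independent:
  assumes "convexly_independent P" "a \<in> P" "b \<in> P" "q \<in> P" "a \<noteq> b" "a \<noteq> q" "b \<noteq> q"
  shows "orient a b q \<noteq> 0"
proof
  assume "orient a b q = 0"
  then have "cross (a - b) (q - b) = 0"
    using orient_swap[of b a q] by (simp add: orient_def)
  then have "collinear {0, a - b, q - b}"
    using cross_eq_0_imp_parallel[of "a - b" "q - b"] assms(5) by (auto simp: collinear_lemma)
  then have "collinear {a, b, q}"
    by (simp add: collinear_3)
  then have "a \<in> convex hull {b, q} \<or> b \<in> convex hull {q, a} \<or> q \<in> convex hull {a, b}"
    by (simp add: collinear_between_cases between_mem_convex_hull)
  moreover have "convex hull {b, q} \<subseteq> convex hull (P - {a})" "convex hull {q, a} \<subseteq> convex hull (P - {b})"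
      "convex hull {a, b} \<subseteq> convex hull (P - {q})"
    using assms(2-7) by (auto intro!: hull_mono)
  ultimately show False
    using assms(1-4) unfolding convexly_independent_def by blast
qed

section \<open>Hull edges of convexly independent sets\<close>

definition oriented_edge :: "real \<Rightarrow> pt set \<Rightarrow> pt \<Rightarrow> pt \<Rightarrow> bool" where
  "oriented_edge s P a b \<longleftrightarrow> (\<forall>q\<in>P - {a, b}. s * orient a b q > 0)"

lemma hull_edge_same_side:
  assumes "convexly_independent P" "hull_edge P a b" "a \<in> P" "b \<in> P"
    and "q \<in> P - {a, b}" "q' \<in> P - {a, b}"
  shows "orient a b q * orient a b q' > 0"
proof -
  obtain n where n: "n \<noteq> 0" "inner n a = inner n b" "\<forall>p\<in>P. inner n p \<le> inner n a"
    and "a \<noteq> b"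
    using assms(2) unfolding hull_edge_def by blast
  have identity: "inner u u * inner m w = cross u m * cross u w + inner u m * inner u w" for u m w :: pt
    by (cases u; cases m; cases w) (simp add: cross_def inner_real_def algebra_simps)
  \<comment> \<open>n is orthogonal to b - a, so inner n (p - a) is a fixed multiple of orient a b p\<close>
  define k where "k = cross (b - a) n"
  have normal: "inner (b - a) n = 0"
    using n(2) by (simp add: inner_diff_left inner_diff_right inner_commute[of _ n])
  have key: "inner (b - a) (b - a) * inner n (p - a) = k * orient a b p" for p
    using identity[of "b - a" n "p - a"] normal unfolding k_def orient_def by (simp add: inner_commute)
  have "inner (b - a) (b - a) * inner n n = k * k"
    using identity[of "b - a" n n] normal unfolding k_def by simp
  then have "k \<noteq> 0"
    using n(1) \<open>a \<noteq> b\<close> by auto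
  have below: "k * orient a b p < 0" if "p \<in> P - {a, b}" for p
  proof -
    have "inner n (p - a) \<le> 0"
      using n(3) that by (simp add: inner_diff_right)
    then have "k * orient a b p \<le> 0"
      unfolding key[symmetric] by (simp add: mult_nonneg_nonpos)
    moreover have "orient a b p \<noteq> 0"
      using orient_neq_0_if_convexly_independent[OF assms(1,3,4), of p] that \<open>a \<noteq> b\<close> by auto
    ultimately show ?thesis
      using \<open>k \<noteq> 0\<close> by (simp add: order_le_neq_trans)
  qed
  have "(k * k) * (orient a b q * orient a b q') > 0"
    using mult_neg_neg[OF below[OF assms(5)] below[OF assms(6)]] by (simp only: ac_simps)
  moreover have "k * k > 0"
    using \<open>k \<noteq> 0\<close> zero_le_square[of k] by (simp add: order_le_neq_trans)
  ultimately show ?thesis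
    by (rule zero_less_mult_pos)
qed

lemma oriented_edge_if_witness:
  assumes "convexly_independent P" "hull_edge P a b" "a \<in> P" "b \<in> P"
    and "q \<in> P - {a, b}" "s * orient a b q > 0"
  shows "oriented_edge s P a b"
  unfolding oriented_edge_def
proof
  fix q' assume "q' \<in> P - {a, b}"
  then have "orient a b q' * orient a b q > 0"
    using hull_edge_same_side[OF assms(1-4)] assms(5) by blast
  then show "s * orient a b q' > 0"
    using assms(6) by (auto simp: zero_less_mult_iff)
qed

lemma oriented_edge_swap: "oriented_edge s P a b \<Longrightarrow> oriented_edge (- s) P b a"
  unfolding oriented_edge_def by (simp add: orient_swap[of b a] insert_commute)

lemma boundary_chain_conv_successively:
  "boundary_chain P L \<longleftrightarrow> distinct L \<and> set L \<subseteq> P \<and> successively (hull_edge P) L"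
  by (simp add: boundary_chain_def successively_conv_nth)

lemma boundary_chain_oriented:
  assumes "convexly_independent P" "boundary_chain P (a # b # L)" "oriented_edge s P a b"
  shows "successively (oriented_edge s P) (a # b # L)"
  using assms(2,3)
proof (induction L arbitrary: a b)
  case (Cons c L)
  have chain: "distinct (a # b # c # L)" "set (a # b # c # L) \<subseteq> P" "hull_edge P b c"
      "boundary_chain P (b # c # L)"
    using Cons.prems(1) by (auto simp: boundary_chain_conv_successively)
  have "s * orient b c a > 0"
    using Cons.prems(2) chain(1,2) unfolding oriented_edge_def by (auto simp: orient_rotate)
  then have "oriented_edge s P b c"
    using chain by (intro oriented_edge_if_witness[OF assms(1), of _ _ a]) auto
  with Cons.IH[OF chain(4)] Cons.prems(2) show ?case
    by simp
qed simp

section \<open>Convex polygons\<close>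

lemma list_less_Nil [simp]: "\<not> list_less [] a b"
  by (simp add: list_less_def)

lemma list_less_Cons: "list_less (x # xs) a b \<longleftrightarrow> a = x \<and> b \<in> set xs \<or> list_less xs a b"
proof
  assume "list_less (x # xs) a b"
  then obtain i j where "i < j" "j < Suc (length xs)" "(x # xs) ! i = a" "(x # xs) ! j = b"
    unfolding list_less_def by auto
  then show "a = x \<and> b \<in> set xs \<or> list_less xs a b"
  proof (cases i)
    case 0
    with \<open>i < j\<close> \<open>j < Suc (length xs)\<close> \<open>(x # xs) ! i = a\<close> \<open>(x # xs) ! j = b\<close>
    show ?thesis
      by (cases j) auto
  next
    case (Suc i')
    with \<open>i < j\<close> obtain j' where "j = Suc j'"
      by (cases j) auto
    with Suc \<open>i < j\<close> \<open>j < Suc (length xs)\<close> \<open>(x # xs) ! i = a\<close> \<open>(x # xs) ! j = b\<close> show ?thesis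
      unfolding list_less_def by auto
  qed
next
  assume "a = x \<and> b \<in> set xs \<or> list_less xs a b"
  then show "list_less (x # xs) a b"
  proof
    assume "a = x \<and> b \<in> set xs"
    then obtain j where "j < length xs" "xs ! j = b" "a = x"
      by (auto simp: in_set_conv_nth)
    then show ?thesis
      unfolding list_less_def by (intro exI[of _ 0] exI[of _ "Suc j"]) auto
  next
    assume "list_less xs a b"
    then obtain i j where "i < j" "j < length xs" "xs ! i = a" "xs ! j = b"
      unfolding list_less_def by blast
    then show ?thesis
      unfolding list_less_def by (intro exI[of _ "Suc i"] exI[of _ "Suc j"]) auto
  qed
qed

lemma list_less_append:
  "list_less (xs @ ys) a b \<longleftrightarrow> list_less xs a b \<or> list_less ys a b \<or> a \<in> set xs \<and> b \<in> set ys"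
  by (induction xs) (auto simp: list_less_Cons)

lemma list_less_rev: "list_less (rev xs) a b \<longleftrightarrow> list_less xs b a"
  by (induction xs) (auto simp: list_less_append list_less_Cons)

lemma list_less_nth:
  assumes "distinct xs" "i < length xs" "j < length xs"
  shows "list_less xs (xs ! i) (xs ! j) \<longleftrightarrow> i < j"
  using assms unfolding list_less_def by (auto simp: nth_eq_iff_index_eq)

lemma list_less_irrefl: "distinct xs \<Longrightarrow> \<not> list_less xs a a"
  unfolding list_less_def by (auto simp: nth_eq_iff_index_eq)

lemma list_less_trans: "distinct xs \<Longrightarrow> list_less xs a b \<Longrightarrow> list_less xs b c \<Longrightarrow> list_less xs a c"
  unfolding list_less_def by (metis less_trans nth_eq_iff_index_eq)

lemma list_less_total:
  "a \<in> set xs \<Longrightarrow> b \<in> set xs \<Longrightarrow> a \<noteq> b \<Longrightarrow> list_less xs a b \<or> list_less xs b a"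
  unfolding list_less_def in_set_conv_nth by (metis linorder_neqE_nat)

lemma strict_total_on_list_less: "distinct xs \<Longrightarrow> strict_total_on (set xs) (list_less xs)"
  unfolding strict_total_on_def using list_less_irrefl list_less_trans list_less_total by metis

lemma cross_pos_trans:
  fixes p x y z :: pt
  assumes "s * cross p x \<ge> 0" "s * cross p y > 0" "s * cross p z > 0"
    and "s * cross x y > 0" "s * cross y z > 0"
  shows "s * cross x z > 0"
proof -
  have identity: "cross x z * cross p y = cross x y * cross p z + cross y z * cross p x"
    by (cases p; cases x; cases y; cases z) (simp add: cross_def algebra_simps)
  have "(s * cross x z) * (s * cross p y) = (s * s) * (cross x z * cross p y)"
    by (simp only: ac_simps)
  also have "\<dots> = (s * cross x y) * (s * cross p z) + (s * cross y z) * (s * cross p x)"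
    unfolding identity by (simp only: distrib_left ac_simps)
  also have "\<dots> > 0"
    using assms by (intro add_pos_nonneg) auto
  finally show ?thesis
    using assms(2) by (simp add: zero_less_mult_iff)
qed

lemma fan_orient:
  fixes e :: "nat \<Rightarrow> pt"
  assumes step: "\<And>t. 1 \<le> t \<Longrightarrow> Suc t < N \<Longrightarrow> s * orient (e 0) (e t) (e (Suc t)) > 0"
    and first: "\<And>t. 2 \<le> t \<Longrightarrow> t < N \<Longrightarrow> s * orient (e 0) (e 1) (e t) > 0"
    and "1 \<le> j"
  shows "j < k \<Longrightarrow> k < N \<Longrightarrow> s * orient (e 0) (e j) (e k) > 0"
proof (induction k)
  case (Suc k)
  show ?case
  proof (cases "j = k")
    case True
    then show ?thesis
      using step[of k] Suc.prems \<open>1 \<le> j\<close> by simp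
  next
    case False
    then have "j < k"
      using Suc.prems by simp
    \<comment> \<open>all of the fan lies weakly on the s-side of e 1 - e 0, where angular order is transitive\<close>
    have "s * cross (e 1 - e 0) (e j - e 0) \<ge> 0"
    proof (cases "j = 1")
      case False
      then show ?thesis
        using first[of j] Suc.prems \<open>1 \<le> j\<close> \<open>j < k\<close> unfolding orient_def by simp
    qed simp
    moreover have "s * cross (e 1 - e 0) (e k - e 0) > 0" "s * cross (e 1 - e 0) (e (Suc k) - e 0) > 0"
      using first[of k] first[of "Suc k"] Suc.prems \<open>1 \<le> j\<close> \<open>j < k\<close> unfolding orient_def by simp_all
    moreover have "s * cross (e j - e 0) (e k - e 0) > 0"
      using Suc.IH \<open>j < k\<close> Suc.prems unfolding orient_def by simp
    moreover have "s * cross (e k - e 0) (e (Suc k) - e 0) > 0"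
      using step[of k] \<open>1 \<le> j\<close> \<open>j < k\<close> Suc.prems unfolding orient_def by simp
    ultimately show ?thesis
      unfolding orient_def by (rule cross_pos_trans)
  qed
qed simp

lemma polygon_orient:
  fixes c :: "nat \<Rightarrow> pt"
  assumes edge: "\<And>i j. i < N \<Longrightarrow> j < N \<Longrightarrow> j \<noteq> i \<Longrightarrow> j \<noteq> Suc i mod N
      \<Longrightarrow> s * orient (c i) (c (Suc i mod N)) (c j) > 0"
    and "i < j" "j < k" "k < N"
  shows "s * orient (c i) (c j) (c k) > 0"
proof -
  define r where "r t = (i + t) mod N" for t
  have r: "r t = (if i + t < N then i + t else i + t - N)" if "t < N" for t
    using that \<open>k < N\<close> \<open>i < j\<close> \<open>j < k\<close> unfolding r_def by (simp add: mod_if)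
  have r_Suc: "r (Suc t) = Suc (r t) mod N" for t
    unfolding r_def by (simp add: mod_Suc_eq)
  have r_less: "r t < N" for t
    using \<open>k < N\<close> unfolding r_def by simp
  have r_inj: "r t \<noteq> r t'" if "t < N" "t' < N" "t \<noteq> t'" for t t'
    using r[OF that(1)] r[OF that(2)] that by (auto split: if_splits)
  define e where "e t = c (r t)" for t
  have step: "s * orient (e 0) (e t) (e (Suc t)) > 0" if "1 \<le> t" "Suc t < N" for t
  proof -
    have "s * orient (c (r t)) (c (Suc (r t) mod N)) (c (r 0)) > 0"
      using r_inj[of 0 t] r_inj[of 0 "Suc t"] that by (intro edge r_less) (auto simp: r_Suc)
    then show ?thesis
      unfolding e_def r_Suc by (simp add: orient_rotate)
  qed
  have first: "s * orient (e 0) (e 1) (e t) > 0" if "2 \<le> t" "t < N" for t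
  proof -
    have "s * orient (c (r 0)) (c (Suc (r 0) mod N)) (c (r t)) > 0"
      using r_inj[of t 0] r_inj[of t 1] that by (intro edge r_less) (auto simp: r_Suc)
    then show ?thesis
      unfolding e_def by (simp add: r_Suc[of 0, symmetric])
  qed
  have "s * orient (e 0) (e (j - i)) (e (k - i)) > 0"
    by (rule fan_orient[OF step first]) (use assms in auto)
  moreover have "r 0 = i" "r (j - i) = j" "r (k - i) = k"
    using r assms(2-4) by auto
  ultimately show ?thesis
    unfolding e_def by simp
qed

definition cyclic_order :: "('a \<Rightarrow> 'a \<Rightarrow> bool) \<Rightarrow> 'a \<Rightarrow> 'a \<Rightarrow> 'a \<Rightarrow> bool" where
  "cyclic_order lt a b c \<longleftrightarrow> lt a b \<and> lt b c \<or> lt b c \<and> lt c a \<or> lt c a \<and> lt a b"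

definition convex_polygon :: "real \<Rightarrow> pt list \<Rightarrow> bool" where
  "convex_polygon s cs \<longleftrightarrow> (\<forall>a b c. cyclic_order (list_less cs) a b c \<longrightarrow> s * orient a b c > 0)"

lemma nth_snoc_hd_Suc:
  assumes "i < length xs"
  shows "(xs @ [hd xs]) ! Suc i = xs ! (Suc i mod length xs)"
proof (cases "Suc i < length xs")
  case False
  then have "Suc i = length xs"
    using assms by simp
  moreover have "xs \<noteq> []"
    using assms by auto
  ultimately show ?thesis
    by (simp add: nth_append hd_conv_nth)
qed (simp add: nth_append)

lemma convex_polygon_if_oriented_edges:
  assumes "distinct cs" "set cs \<subseteq> P" "successively (oriented_edge s P) (cs @ [hd cs])"
  shows "convex_polygon s cs"
proof -
  define N where "N = length cs"
  have edge: "s * orient (cs ! i) (cs ! (Suc i mod N)) (cs ! j) > 0"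
    if "i < N" "j < N" "j \<noteq> i" "j \<noteq> Suc i mod N" for i j
  proof -
    have "oriented_edge s P (cs ! i) (cs ! (Suc i mod N))"
      using successively_nth[OF assms(3), of i] that(1) nth_snoc_hd_Suc[of i cs]
      unfolding N_def by (simp add: nth_append)
    moreover have "Suc i mod N < N"
      using that(1) by simp
    then have "cs ! j \<in> P - {cs ! i, cs ! (Suc i mod N)}"
      using that assms(1,2) unfolding N_def by (auto simp: nth_eq_iff_index_eq)
    ultimately show ?thesis
      unfolding oriented_edge_def by blast
  qed
  have ordered: "s * orient a b c > 0" if ab: "list_less cs a b" and bc: "list_less cs b c" for a b c
  proof -
    obtain i j where ij: "i < j" "j < N" "cs ! i = a" "cs ! j = b"
      using ab unfolding list_less_def N_def by blast
    obtain j' k where jk: "j' < k" "k < N" "cs ! j' = b" "cs ! k = c"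
      using bc unfolding list_less_def N_def by blast
    have "j = j'"
      using ij jk nth_eq_iff_index_eq[OF assms(1), of j j'] unfolding N_def by auto
    then show ?thesis
      using polygon_orient[where c = "(!) cs", OF edge, of i j k] ij jk by simp
  qed
  show ?thesis
    unfolding convex_polygon_def cyclic_order_def
  proof (intro allI impI)
    fix a b c
    assume "list_less cs a b \<and> list_less cs b c \<or> list_less cs b c \<and> list_less cs c a
      \<or> list_less cs c a \<and> list_less cs a b"
    then show "s * orient a b c > 0"
      using ordered[of a b c] ordered[of b c a] ordered[of c a b] orient_rotate[of a b c]
        orient_rotate[of c a b] by auto
  qed
qed

lemma convex_polygon_orient:
  "convex_polygon s cs \<Longrightarrow> cyclic_order (list_less cs) a b c \<Longrightarrow> s * orient a b c > 0"
  unfolding convex_polygon_def by blast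

lemma convex_polygon_narrow:
  assumes "convex_polygon s cs" "cyclic_order (list_less cs) x a d"
    and "b = a \<or> b = d \<or> cyclic_order (list_less cs) x a b \<and> cyclic_order (list_less cs) x b d"
    and "inner (a - x) (d - x) > 0"
  shows "inner (a - x) (b - x) > 0 \<and> inner (b - x) (d - x) > 0"
proof -
  have "s * orient x a d > 0"
    using convex_polygon_orient[OF assms(1,2)] .
  then have "a \<noteq> x" "d \<noteq> x"
    by auto
  from assms(3) consider "b = a" | "b = d"
    | "cyclic_order (list_less cs) x a b" "cyclic_order (list_less cs) x b d"
    by blast
  then show ?thesis
  proof cases
    case 3
    then show ?thesis
      using inner_pos_inside_acute_angle[of s x a b d] convex_polygon_orient[OF assms(1)]
        \<open>s * orient x a d > 0\<close> assms(4) by blast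
  qed (use assms(4) \<open>a \<noteq> x\<close> \<open>d \<noteq> x\<close> in \<open>auto simp: inner_commute\<close>)
qed

lemma convex_polygon_not_all_acute:
  assumes "convex_polygon s cs" "distinct cs"
    and "list_less cs a b" "list_less cs b c" "list_less cs c d"
    and "inner (b - a) (d - a) > 0" "inner (a - b) (c - b) > 0"
    and "inner (b - c) (d - c) > 0" "inner (c - d) (a - d) > 0"
  shows False
proof -
  have "list_less cs a c" "list_less cs a d" "list_less cs b d"
    using list_less_trans[OF assms(2)] assms(3-5) by blast+
  then have "s * orient a b c > 0" "s * orient a b d > 0" "s * orient a c d > 0" "s * orient b c d > 0"
    using assms(3-5) by (auto intro!: convex_polygon_orient[OF assms(1)] simp: cyclic_order_def)
  then show False
    using convex_quadrilateral_not_all_acute assms(6-9) by blast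
qed

section \<open>Forward paths with a back edge\<close>

lemma forward_pathD:
  assumes "forward_path U V ltU ltV G ws"
  shows "2 \<le> length ws"
    and "\<And>i. Suc i < length ws \<Longrightarrow> (ws ! i \<in> U \<and> ws ! Suc i \<in> V) \<or> (ws ! i \<in> V \<and> ws ! Suc i \<in> U)"
    and "\<And>i. Suc i < length ws \<Longrightarrow> badj G (ws ! i) (ws ! Suc i)"
    and "\<And>i j. i < j \<Longrightarrow> j < length ws \<Longrightarrow> ws ! i \<in> U \<Longrightarrow> ws ! j \<in> U \<Longrightarrow> ltU (ws ! i) (ws ! j)"
    and "\<And>i j. i < j \<Longrightarrow> j < length ws \<Longrightarrow> ws ! i \<in> V \<Longrightarrow> ws ! j \<in> V \<Longrightarrow> ltV (ws ! i) (ws ! j)"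
  using assms unfolding forward_path_def by blast+

lemma forward_path_part:
  assumes "forward_path U V ltU ltV G ws" "U \<inter> V = {}" "i < length ws"
  shows "(ws ! i \<in> U \<longleftrightarrow> (ws ! 0 \<in> U \<longleftrightarrow> even i)) \<and> ws ! i \<in> U \<union> V"
  using assms(3)
proof (induction i)
  case 0
  show ?case
    using forward_pathD(1)[OF assms(1)] forward_pathD(2)[OF assms(1), of 0] by auto
next
  case (Suc i)
  then have "(ws ! i \<in> U \<and> ws ! Suc i \<in> V) \<or> (ws ! i \<in> V \<and> ws ! Suc i \<in> U)"
    using forward_pathD(2)[OF assms(1)] by blast
  with Suc assms(2) show ?case
    by auto
qed

lemma forward_path_weakly_increasing:
  assumes "forward_path U V ltU ltV G ws" "i \<le> j" "j < length ws"
  shows "ws ! i \<in> U \<Longrightarrow> ws ! j \<in> U \<Longrightarrow> ws ! i = ws ! j \<or> ltU (ws ! i) (ws ! j)"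
    and "ws ! i \<in> V \<Longrightarrow> ws ! j \<in> V \<Longrightarrow> ws ! i = ws ! j \<or> ltV (ws ! i) (ws ! j)"
  using forward_pathD(4,5)[OF assms(1), of i j] assms(2,3) by (cases "i = j"; simp)+

lemma badj_oriented:
  assumes "G \<subseteq> U \<times> V" "U \<inter> V = {}" "badj G a b"
  shows "a \<in> U \<Longrightarrow> (a, b) \<in> G" and "b \<in> U \<Longrightarrow> (b, a) \<in> G"
  using assms unfolding badj_def by auto

lemma back_edgeD:
  assumes "back_edge U V ltU ltV G ws x"
  shows "badj G (ws ! 0) x" "if ws ! 0 \<in> U then x \<in> V else x \<in> U"
    and "part_lt U ltU ltV (ws ! 1) x"
    and "\<exists>k < length ws. same_part U V (ws ! k) x \<and> (x = ws ! k \<or> part_lt U ltU ltV x (ws ! k))"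
  using assms unfolding back_edge_def by blast+

lemma strict_total_on_asym:
  assumes "strict_total_on A lt" "a \<in> A" "b \<in> A" "lt a b"
  shows "\<not> lt b a" "a \<noteq> b"
proof -
  have irrefl: "\<forall>x\<in>A. \<not> lt x x"
    using assms(1) unfolding strict_total_on_def by (rule conjunct1)
  have trans: "\<forall>x\<in>A. \<forall>y\<in>A. \<forall>z\<in>A. lt x y \<and> lt y z \<longrightarrow> lt x z"
    using assms(1) unfolding strict_total_on_def by (rule conjunct2[THEN conjunct1])
  show "\<not> lt b a"
    using irrefl trans assms(2-4) by meson
  show "a \<noteq> b"
    using irrefl assms(2-4) by meson
qed

lemma part_lt_asym:
  assumes "U \<inter> V = {}" "strict_total_on U ltU" "strict_total_on V ltV"
    and "same_part U V a x" "part_lt U ltU ltV a x"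
  shows "x \<noteq> a \<and> \<not> part_lt U ltU ltV x a"
  using assms(4) unfolding same_part_def
proof (elim disjE conjE)
  assume "a \<in> U" "x \<in> U"
  then show ?thesis
    using assms(5) strict_total_on_asym[OF assms(2) \<open>a \<in> U\<close> \<open>x \<in> U\<close>] unfolding part_lt_def by auto
next
  assume "a \<in> V" "x \<in> V"
  then have "a \<notin> U" "x \<notin> U"
    using assms(1) by auto
  then show ?thesis
    using assms(5) strict_total_on_asym[OF assms(3) \<open>a \<in> V\<close> \<open>x \<in> V\<close>] unfolding part_lt_def by auto
qed

lemma back_edge_far_end:
  assumes fp: "forward_path U V ltU ltV G ws" and be: "back_edge U V ltU ltV G ws x"
    and UV: "U \<inter> V = {}" and "strict_total_on U ltU" "strict_total_on V ltV"
  obtains k where "3 \<le> k" "k < length ws" "odd k" "x = ws ! k \<or> part_lt U ltU ltV x (ws ! k)"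
proof -
  have part: "(ws ! i \<in> U \<longleftrightarrow> (ws ! 0 \<in> U \<longleftrightarrow> even i)) \<and> ws ! i \<in> U \<union> V" if "i < length ws" for i
    using forward_path_part[OF fp UV that] .
  have side: "if ws ! 0 \<in> U then x \<in> V else x \<in> U"
    by (rule back_edgeD(2)[OF be])
  then have x_side: "x \<in> U \<longleftrightarrow> ws ! 0 \<notin> U"
    using UV by (cases "ws ! 0 \<in> U") auto
  have below_x: "part_lt U ltU ltV (ws ! 1) x"
    by (rule back_edgeD(3)[OF be])
  obtain k where k: "k < length ws" "same_part U V (ws ! k) x"
      "x = ws ! k \<or> part_lt U ltU ltV x (ws ! k)"
    using back_edgeD(4)[OF be] by blast
  have "ws ! k \<in> U \<longleftrightarrow> x \<in> U"
    using k(2) UV unfolding same_part_def by blast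
  then have "odd k"
    using part[of k] k(1) x_side(1) by blast
  moreover have "k \<noteq> 1"
  proof
    assume "k = 1"
    with k(2,3) part_lt_asym[OF UV assms(4,5) _ below_x] show False
      by auto
  qed
  ultimately have "3 \<le> k"
    by presburger
  with k that \<open>odd k\<close> show ?thesis
    by blast
qed

lemma back_edge_pattern_from_U:
  assumes fp: "forward_path U V ltU ltV G ws" and be: "back_edge U V ltU ltV G ws x"
    and UV: "U \<inter> V = {}" and orders: "strict_total_on U ltU" "strict_total_on V ltV"
    and G: "G \<subseteq> U \<times> V" and start: "ws ! 0 \<in> U"
  obtains u0 v1 u2 u' v' where "(u0, v1) \<in> G" "(u2, v1) \<in> G" "(u0, x) \<in> G" "(u', v') \<in> G"
    and "ltU u0 u2" "u2 = u' \<or> ltU u2 u'" "ltV v1 x" "x = v' \<or> ltV x v'"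
proof -
  obtain k where k: "3 \<le> k" "k < length ws" "odd k" "x = ws ! k \<or> part_lt U ltU ltV x (ws ! k)"
    using back_edge_far_end[OF fp be UV orders] .
  have in_U: "ws ! i \<in> U \<longleftrightarrow> even i" if "i < length ws" for i
    using forward_path_part[OF fp UV that] start by simp
  have "x \<in> V" "x \<notin> U"
    using back_edgeD(2)[OF be] start UV by auto
  define k' where "k' = k - 1"
  have k': "Suc k' = k" "even k'" "2 \<le> k'"
    using k unfolding k'_def by auto
  have adj: "badj G (ws ! 0) (ws ! 1)" "badj G (ws ! 1) (ws ! 2)" "badj G (ws ! k') (ws ! k)"
    using forward_pathD(3)[OF fp, of 0] forward_pathD(3)[OF fp, of 1] forward_pathD(3)[OF fp, of k'] k k'
    by (simp_all add: numeral_2_eq_2)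
  show ?thesis
  proof (rule that[of "ws ! 0" "ws ! 1" "ws ! 2" "ws ! k'" "ws ! k"])
    show "(ws ! 0, ws ! 1) \<in> G"
      by (rule badj_oriented(1)[OF G UV adj(1)]) (use k in_U start in auto)
    show "(ws ! 2, ws ! 1) \<in> G"
      by (rule badj_oriented(2)[OF G UV adj(2)]) (use k in_U in auto)
    show "(ws ! 0, x) \<in> G"
      by (rule badj_oriented(1)[OF G UV back_edgeD(1)[OF be] start])
    show "(ws ! k', ws ! k) \<in> G"
      by (rule badj_oriented(1)[OF G UV adj(3)]) (use k k' in_U in auto)
    show "ltU (ws ! 0) (ws ! 2)"
      by (rule forward_pathD(4)[OF fp]) (use k in_U start in auto)
    show "ws ! 2 = ws ! k' \<or> ltU (ws ! 2) (ws ! k')"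
      by (rule forward_path_weakly_increasing(1)[OF fp]) (use k k' in_U in auto)
    show "ltV (ws ! 1) x"
      using back_edgeD(3)[OF be] in_U[of 1] k unfolding part_lt_def by auto
    show "x = ws ! k \<or> ltV x (ws ! k)"
      using k(4) \<open>x \<notin> U\<close> unfolding part_lt_def by auto
  qed
qed

lemma back_edge_pattern_from_V:
  assumes fp: "forward_path U V ltU ltV G ws" and be: "back_edge U V ltU ltV G ws x"
    and UV: "U \<inter> V = {}" and orders: "strict_total_on U ltU" "strict_total_on V ltV"
    and G: "G \<subseteq> U \<times> V" and start: "ws ! 0 \<in> V"
  obtains v0 u1 v2 u' v' u'' where "(u1, v0) \<in> G" "(x, v0) \<in> G" "(u1, v2) \<in> G"
    and "(u', v') \<in> G" "(u'', v') \<in> G"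
    and "ltV v0 v2" "v2 = v' \<or> ltV v2 v'" "ltU u1 x" "x = u'' \<or> ltU x u''"
    and "u1 = u' \<or> ltU u1 u'" "ltU u' u''"
proof -
  obtain k where k: "3 \<le> k" "k < length ws" "odd k" "x = ws ! k \<or> part_lt U ltU ltV x (ws ! k)"
    using back_edge_far_end[OF fp be UV orders] .
  have "ws ! 0 \<notin> U"
    using start UV by auto
  then have in_U: "ws ! i \<in> U \<longleftrightarrow> odd i" if "i < length ws" for i
    using forward_path_part[OF fp UV that] by simp
  have in_V: "ws ! i \<in> V \<longleftrightarrow> even i" if "i < length ws" for i
    using forward_path_part[OF fp UV that] in_U[OF that] UV by auto
  have "x \<in> U"
    using back_edgeD(2)[OF be] \<open>ws ! 0 \<notin> U\<close> by simp
  define k' where "k' = k - 1"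
  define k'' where "k'' = k - 2"
  have k': "Suc k' = k" "Suc k'' = k'" "odd k''" "1 \<le> k''"
    using k unfolding k'_def k''_def by auto
  have adj: "badj G (ws ! 0) (ws ! 1)" "badj G (ws ! 1) (ws ! 2)"
      "badj G (ws ! k'') (ws ! k')" "badj G (ws ! k') (ws ! k)"
    using forward_pathD(3)[OF fp, of 0] forward_pathD(3)[OF fp, of 1] forward_pathD(3)[OF fp, of k'']
      forward_pathD(3)[OF fp, of k'] k k'
    by (simp_all add: numeral_2_eq_2)
  show ?thesis
  proof (rule that[of "ws ! 1" "ws ! 0" "ws ! 2" "ws ! k''" "ws ! k'" "ws ! k"])
    show "(ws ! 1, ws ! 0) \<in> G"
      by (rule badj_oriented(2)[OF G UV adj(1)]) (use k in_U in auto)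
    show "(x, ws ! 0) \<in> G"
      by (rule badj_oriented(2)[OF G UV back_edgeD(1)[OF be] \<open>x \<in> U\<close>])
    show "(ws ! 1, ws ! 2) \<in> G"
      by (rule badj_oriented(1)[OF G UV adj(2)]) (use k in_U in auto)
    show "(ws ! k'', ws ! k') \<in> G"
      by (rule badj_oriented(1)[OF G UV adj(3)]) (use k k' in_U in auto)
    show "(ws ! k, ws ! k') \<in> G"
      by (rule badj_oriented(2)[OF G UV adj(4)]) (use k k' in_U in auto)
    show "ltV (ws ! 0) (ws ! 2)"
      by (rule forward_pathD(5)[OF fp]) (use k in_V start in auto)
    show "ws ! 2 = ws ! k' \<or> ltV (ws ! 2) (ws ! k')"
      by (rule forward_path_weakly_increasing(2)[OF fp]) (use k k' in_V in auto)
    show "ltU (ws ! 1) x"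
      using back_edgeD(3)[OF be] in_U[of 1] k unfolding part_lt_def by auto
    show "x = ws ! k \<or> ltU x (ws ! k)"
      using k(4) \<open>x \<in> U\<close> unfolding part_lt_def by auto
    show "ws ! 1 = ws ! k'' \<or> ltU (ws ! 1) (ws ! k'')"
      by (rule forward_path_weakly_increasing(1)[OF fp]) (use k k' in_U in auto)
    show "ltU (ws ! k'') (ws ! k)"
      by (rule forward_pathD(4)[OF fp]) (use k k' in_U in auto)
  qed
qed

lemma path_restricted_empty:
  assumes "distinct us" "distinct vs" "set us \<inter> set vs = {}"
  shows "path_restricted (set us) (set vs) (list_less us) (list_less vs) {}"
proof -
  have no_path: "\<not> forward_path U V ltU ltV {} ws" for U V ltU ltV ws
  proof
    assume fp: "forward_path U V ltU ltV {} ws"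
    show False
      using forward_pathD(1)[OF fp] forward_pathD(3)[OF fp, of 0] by (simp add: badj_def)
  qed
  moreover have "ordered_bipartite (set us) (set vs) (list_less us) (list_less vs) {}"
    unfolding ordered_bipartite_def
    using assms strict_total_on_list_less[OF assms(1)] strict_total_on_list_less[OF assms(2)] by simp
  ultimately show ?thesis
    unfolding path_restricted_def by blast
qed

section \<open>Acute bipartite graphs on a convex polygon\<close>

text \<open>
  The polygon is traversed as pa, us, pb, rev vs; hence the order of vs is the reverse of the
  polygon order.
\<close>

locale acute_polygon_graph =
  fixes s :: real and pa pb :: pt and us vs :: "pt list" and E1 :: "(pt \<times> pt) set"
  assumes convex: "convex_polygon s (pa # us @ pb # rev vs)"
    and distinct: "distinct (pa # us @ pb # rev vs)"
    and E1_between: "E1 \<subseteq> set us \<times> set vs"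
    and acute_at_u: "\<And>u u' v. (u, v) \<in> E1 \<Longrightarrow> (u', v) \<in> E1 \<Longrightarrow> u \<noteq> u' \<Longrightarrow> inner (v - u) (u' - u) > 0"
    and acute_at_v: "\<And>u v v'. (u, v) \<in> E1 \<Longrightarrow> (u, v') \<in> E1 \<Longrightarrow> v \<noteq> v' \<Longrightarrow> inner (u - v) (v' - v) > 0"
    and acute_toward_predecessor: "\<And>u j. (u, vs ! Suc j) \<in> E1 \<Longrightarrow> Suc j < length vs
      \<Longrightarrow> inner (u - vs ! Suc j) (vs ! j - vs ! Suc j) > 0"
begin

abbreviation lt :: "pt \<Rightarrow> pt \<Rightarrow> bool" where
  "lt \<equiv> list_less (pa # us @ pb # rev vs)"

lemma lt_trans: "lt a b \<Longrightarrow> lt b c \<Longrightarrow> lt a c"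
  using list_less_trans[OF distinct] .

lemma lt_imp_neq: "lt a b \<Longrightarrow> a \<noteq> b"
  using list_less_irrefl[OF distinct] by blast

lemma lt_if_us: "list_less us a b \<Longrightarrow> lt a b"
  by (simp add: list_less_Cons list_less_append)

lemma lt_if_vs: "list_less vs a b \<Longrightarrow> lt b a"
  by (simp add: list_less_Cons list_less_append list_less_rev)

lemma lt_us_vs: "a \<in> set us \<Longrightarrow> b \<in> set vs \<Longrightarrow> lt a b"
  by (simp add: list_less_Cons list_less_append)

lemma distinct_vs: "distinct vs"
  using distinct by simp

lemma acute_toward_earlier:
  assumes "(u, v) \<in> E1" "list_less vs v' v"
  shows "inner (u - v) (v' - v) > 0"
proof -
  obtain j' j where j: "j' < j" "j < length vs" "vs ! j' = v'" "vs ! j = v"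
    using assms(2) unfolding list_less_def by blast
  define p where "p = vs ! (j - 1)"
  have "inner (p - v) (u - v) > 0"
    using acute_toward_predecessor[of u "j - 1"] assms(1) j unfolding p_def by (simp add: inner_commute)
  moreover have "lt v p"
    using list_less_nth[OF distinct_vs, of "j - 1" j] j lt_if_vs unfolding p_def by simp
  moreover have "v' = p \<or> lt p v'"
    using list_less_nth[OF distinct_vs, of j' "j - 1"] j lt_if_vs unfolding p_def
    by (cases "j' = j - 1") auto
  moreover have "lt u v"
    using assms(1) E1_between lt_us_vs by blast
  ultimately have "inner (p - v) (v' - v) > 0 \<and> inner (v' - v) (u - v) > 0"
    using convex_polygon_narrow[OF convex, of v p u v'] lt_trans unfolding cyclic_order_def by blast
  then show ?thesis
    by (simp add: inner_commute)
qed

lemma no_back_edge_pattern_from_U: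
  assumes E1: "(u0, v1) \<in> E1" "(u2, v1) \<in> E1" "(u0, x) \<in> E1" "(u', v') \<in> E1" "(z, v') \<in> E1"
    and U: "list_less us u0 u2" "u2 = u' \<or> list_less us u2 u'" "list_less us u' z"
    and V: "list_less vs v1 x" "x = v' \<or> list_less vs x v'"
  shows False
proof -
  \<comment> \<open>the quadrilateral u0 z v' v1 would have four acute angles\<close>
  have "lt u0 u2" "lt u' z" "lt x v1" "u2 = u' \<or> lt u2 u'" "v' = x \<or> lt v' x" "lt z v'"
    using U V lt_if_us lt_if_vs lt_us_vs E1(5) E1_between by blast+
  then have order: "lt u0 z" "lt u2 z" "lt u0 u'" "lt u0 v'" "lt v' v1" "lt u0 x" "lt z v1" "lt u2 v1"
    using lt_trans by blast+
  have "list_less vs v1 v'"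
    using V list_less_trans[OF distinct_vs] by blast
  have h1: "inner (u2 - u0) (v1 - u0) > 0"
    using acute_at_u[OF E1(1,2) lt_imp_neq[OF \<open>lt u0 u2\<close>]] by (simp add: inner_commute)
  have h2: "inner (u0 - v1) (x - v1) > 0"
    using acute_at_v[OF E1(1,3) not_sym[OF lt_imp_neq[OF \<open>lt x v1\<close>]]] .
  have h3: "inner (z - v') (v1 - v') > 0"
    using acute_toward_earlier[OF E1(5) \<open>list_less vs v1 v'\<close>] .
  have h4: "inner (v' - z) (u' - z) > 0"
    using acute_at_u[OF E1(5,4) not_sym[OF lt_imp_neq[OF \<open>lt u' z\<close>]]] .
  have q1: "inner (z - u0) (v1 - u0) > 0"
    using convex_polygon_narrow[OF convex _ _ h1, of z] \<open>lt u0 u2\<close> order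
    unfolding cyclic_order_def by blast
  have q2: "inner (v' - z) (u0 - z) > 0"
    using convex_polygon_narrow[OF convex _ _ h4, of u0] \<open>lt u' z\<close> \<open>lt z v'\<close> order
    unfolding cyclic_order_def by blast
  have q4: "inner (u0 - v1) (v' - v1) > 0"
    using convex_polygon_narrow[OF convex _ _ h2, of v'] \<open>lt x v1\<close> \<open>v' = x \<or> lt v' x\<close> order
    unfolding cyclic_order_def by blast
  show False
    by (rule convex_polygon_not_all_acute[OF convex distinct order(1) \<open>lt z v'\<close> order(5)])
      (use q1 q2 h3 q4 in \<open>simp_all add: inner_commute\<close>)
qed

lemma no_back_edge_pattern_from_V:
  assumes E1: "(u1, v0) \<in> E1" "(x, v0) \<in> E1" "(u1, v2) \<in> E1" "(u', v') \<in> E1" "(u'', v') \<in> E1"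
    and V: "list_less vs v0 v2" "v2 = v' \<or> list_less vs v2 v'"
    and U: "list_less us u1 x" "x = u'' \<or> list_less us x u''" "u1 = u' \<or> list_less us u1 u'"
      "list_less us u' u''"
  shows False
proof -
  \<comment> \<open>the quadrilateral u1 u'' v' v0 would have four acute angles\<close>
  have "lt u1 x" "lt u' u''" "lt v2 v0" "u'' = x \<or> lt x u''" "u1 = u' \<or> lt u1 u'" "v' = v2 \<or> lt v' v2"
      "lt u'' v'"
    using U V lt_if_us lt_if_vs lt_us_vs E1(5) E1_between by blast+
  then have order: "lt u1 u''" "lt u1 v0" "lt u1 v2" "lt v' v0" "lt u' v'" "lt u1 v'" "lt x v0"
      "lt u' v0" "lt u'' v0"
    using lt_trans by blast+
  have "list_less vs v0 v'"
    using V list_less_trans[OF distinct_vs] by blast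
  have h1: "inner (x - u1) (v0 - u1) > 0"
    using acute_at_u[OF E1(1,2) lt_imp_neq[OF \<open>lt u1 x\<close>]] by (simp add: inner_commute)
  have h2: "inner (u1 - v0) (v2 - v0) > 0"
    using acute_at_v[OF E1(1,3) not_sym[OF lt_imp_neq[OF \<open>lt v2 v0\<close>]]] .
  have h3: "inner (u'' - v') (v0 - v') > 0"
    using acute_toward_earlier[OF E1(5) \<open>list_less vs v0 v'\<close>] .
  have h4: "inner (v' - u'') (u' - u'') > 0"
    using acute_at_u[OF E1(5,4) not_sym[OF lt_imp_neq[OF \<open>lt u' u''\<close>]]] .
  have q1: "inner (u'' - u1) (v0 - u1) > 0"
    using convex_polygon_narrow[OF convex _ _ h1, of u''] \<open>lt u1 x\<close> \<open>u'' = x \<or> lt x u''\<close> order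
    unfolding cyclic_order_def by blast
  have q2: "inner (v' - u'') (u1 - u'') > 0"
    using convex_polygon_narrow[OF convex _ _ h4, of u1] \<open>lt u' u''\<close> \<open>lt u'' v'\<close>
      \<open>u1 = u' \<or> lt u1 u'\<close> order
    unfolding cyclic_order_def by blast
  have q4: "inner (u1 - v0) (v' - v0) > 0"
    using convex_polygon_narrow[OF convex _ _ h2, of v'] \<open>lt v2 v0\<close> \<open>v' = v2 \<or> lt v' v2\<close> order
    unfolding cyclic_order_def by blast
  show False
    by (rule convex_polygon_not_all_acute[OF convex distinct order(1) \<open>lt u'' v'\<close> order(4)])
      (use q1 q2 h3 q4 in \<open>simp_all add: inner_commute\<close>)
qed

lemma no_forward_path_with_back_edge:
  assumes fp: "forward_path (set us) (set vs) (list_less us) (list_less vs) (delete_max_edges (list_less us) E1) ws"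
    and be: "back_edge (set us) (set vs) (list_less us) (list_less vs) (delete_max_edges (list_less us) E1) ws x"
  shows False
proof -
  define G where "G = delete_max_edges (list_less us) E1"
  have "G \<subseteq> E1"
    unfolding G_def delete_max_edges_def by auto
  have UV: "set us \<inter> set vs = {}" and orders: "strict_total_on (set us) (list_less us)"
      "strict_total_on (set vs) (list_less vs)"
    using distinct by (auto intro: strict_total_on_list_less)
  have G_between: "G \<subseteq> set us \<times> set vs"
    using \<open>G \<subseteq> E1\<close> E1_between by blast
  note fp = fp[folded G_def] and be = be[folded G_def]
  have "0 < length ws"
    using forward_pathD(1)[OF fp] by linarith
  then have "ws ! 0 \<in> set us \<union> set vs"
    using forward_path_part[OF fp UV] by blast
  then show False
  proof
    assume "ws ! 0 \<in> set us"
    then obtain u0 v1 u2 u' v' where "(u0, v1) \<in> G" "(u2, v1) \<in> G" "(u0, x) \<in> G" "(u', v') \<in> G"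
      and "list_less us u0 u2" "u2 = u' \<or> list_less us u2 u'" "list_less vs v1 x"
        "x = v' \<or> list_less vs x v'"
      by (rule back_edge_pattern_from_U[OF fp be UV orders G_between])
    \<comment> \<open>(u', v') survived the deletion, so v' has an E1-neighbour z beyond u'\<close>
    moreover obtain z where "(z, v') \<in> E1" "list_less us u' z"
      using \<open>(u', v') \<in> G\<close> unfolding G_def delete_max_edges_def by blast
    ultimately show False
      using no_back_edge_pattern_from_U \<open>G \<subseteq> E1\<close> by blast
  next
    assume "ws ! 0 \<in> set vs"
    then obtain v0 u1 v2 u' v' u'' where "(u1, v0) \<in> G" "(x, v0) \<in> G" "(u1, v2) \<in> G"
        "(u', v') \<in> G" "(u'', v') \<in> G"
      and "list_less vs v0 v2" "v2 = v' \<or> list_less vs v2 v'" "list_less us u1 x"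
        "x = u'' \<or> list_less us x u''" "u1 = u' \<or> list_less us u1 u'" "list_less us u' u''"
      by (rule back_edge_pattern_from_V[OF fp be UV orders G_between])
    then show False
      using no_back_edge_pattern_from_V \<open>G \<subseteq> E1\<close> by blast
  qed
qed

theorem path_restricted_delete_max_edges:
  "path_restricted (set us) (set vs) (list_less us) (list_less vs) (delete_max_edges (list_less us) E1)"
proof -
  have "delete_max_edges (list_less us) E1 \<subseteq> set us \<times> set vs"
    using E1_between unfolding delete_max_edges_def by auto
  then have "ordered_bipartite (set us) (set vs) (list_less us) (list_less vs) (delete_max_edges (list_less us) E1)"
    using distinct strict_total_on_list_less unfolding ordered_bipartite_def by auto
  then show ?thesis
    unfolding path_restricted_def using no_forward_path_with_back_edge by blast
qed

end

section \<open>The two hull chains between antipodal points\<close>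

lemma successively_append_Cons:
  "successively R (xs @ [y]) \<Longrightarrow> successively R (y # ys) \<Longrightarrow> successively R (xs @ y # ys)"
  using successively_append_iff[of R "xs @ [y]" ys] by (cases ys) auto

lemma locally_gabriel_inner_pos:
  assumes "locally_gabriel P E" "{x, y} \<in> E" "{x, z} \<in> E" "y \<noteq> z"
  shows "inner (x - y) (z - y) > 0"
  using assms inner_pos_if_angle3_lt_pi_half unfolding locally_gabriel_def by blast

lemma boundary_chain_oriented_toward_side:
  assumes ci: "convexly_independent P" and L: "boundary_chain P (pa # us @ [pb])"
    and side: "\<forall>q\<in>set us. \<epsilon> * orient pa pb q > 0" and "us \<noteq> []"
  shows "successively (oriented_edge (- \<epsilon>) P) (pa # us @ [pb])"
proof -
  obtain u us' where u: "us = u # us'"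
    using \<open>us \<noteq> []\<close> by (meson neq_Nil_conv)
  have "distinct (pa # us @ [pb])" "set (pa # us @ [pb]) \<subseteq> P" "hull_edge P pa u"
    using L unfolding u boundary_chain_conv_successively by auto
  then have "oriented_edge (- \<epsilon>) P pa u"
    using side u orient_swap23[of pa pb u] by (intro oriented_edge_if_witness[OF ci, of _ _ pb]) auto
  then show ?thesis
    using boundary_chain_oriented[OF ci] L unfolding u by simp
qed

lemma convex_polygon_of_boundary_chains:
  assumes ci: "convexly_independent P"
    and L: "boundary_chain P (pa # us @ [pb])" and M: "boundary_chain P (pa # vs @ [pb])"
    and above: "\<forall>q\<in>set us. \<epsilon> * orient pa pb q > 0" and below: "\<forall>q\<in>set vs. \<epsilon> * orient pa pb q < 0"
    and "us \<noteq> []" "vs \<noteq> []"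
  shows "convex_polygon (- \<epsilon>) (pa # us @ pb # rev vs) \<and> distinct (pa # us @ pb # rev vs)"
proof -
  have "set us \<inter> set vs = {}"
    using above below by (meson disjoint_iff not_less_iff_gr_or_eq)
  then have distinct: "distinct (pa # us @ pb # rev vs)"
    using L M by (auto simp: boundary_chain_def)
  have "successively (oriented_edge (- \<epsilon>) P) (pa # us @ [pb])"
    using boundary_chain_oriented_toward_side[OF ci L above \<open>us \<noteq> []\<close>] .
  moreover have "successively (oriented_edge \<epsilon> P) (pa # vs @ [pb])"
    using boundary_chain_oriented_toward_side[OF ci M _ \<open>vs \<noteq> []\<close>, of "- \<epsilon>"] below by simp
  then have "successively (\<lambda>x y. oriented_edge (- \<epsilon>) P y x) (pa # vs @ [pb])"
    by (rule successively_mono) (rule oriented_edge_swap)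
  then have "successively (oriented_edge (- \<epsilon>) P) (pb # rev vs @ [pa])"
    using successively_rev[of "oriented_edge (- \<epsilon>) P" "pa # vs @ [pb]"] by simp
  ultimately have "successively (oriented_edge (- \<epsilon>) P) ((pa # us @ pb # rev vs) @ [pa])"
    using successively_append_Cons[of _ "pa # us" pb "rev vs @ [pa]"] by simp
  moreover have "set (pa # us @ pb # rev vs) \<subseteq> P"
    using L M by (auto simp: boundary_chain_def)
  ultimately have "convex_polygon (- \<epsilon>) (pa # us @ pb # rev vs)"
    by (intro convex_polygon_if_oriented_edges[OF distinct]) simp_all
  with distinct show ?thesis
    by blast
qed

lemma path_restricted_delete_max_edges_of_hull_chains:
  fixes P :: "pt set" and E :: "pt set set" and E1 :: "(pt \<times> pt) set"
  assumes ci: "convexly_independent P" and lg: "locally_gabriel P E"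
    and above: "\<forall>q\<in>set us. \<epsilon> * orient pa pb q > 0" and below: "\<forall>q\<in>set vs. \<epsilon> * orient pa pb q < 0"
    and L: "boundary_chain P (pa # us @ [pb])" and M: "boundary_chain P (pa # vs @ [pb])"
    and E1: "E1 \<subseteq> {(u, v). u \<in> set us \<and> v \<in> set vs \<and> {u, v} \<in> E}"
    and predecessor: "\<And>u j. (u, vs ! Suc j) \<in> E1 \<Longrightarrow> Suc j < length vs
      \<Longrightarrow> angle3 u (vs ! Suc j) (vs ! j) < pi / 2"
  shows "path_restricted (set us) (set vs) (list_less us) (list_less vs) (delete_max_edges (list_less us) E1)"
proof (cases "us = [] \<or> vs = []")
  case True
  then have "E1 = {}" "set us \<inter> set vs = {}"
    using E1 by auto
  moreover have "distinct us" "distinct vs"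
    using L M by (simp_all add: boundary_chain_def)
  ultimately show ?thesis
    using path_restricted_empty by (simp add: delete_max_edges_def)
next
  case False
  then have polygon: "convex_polygon (- \<epsilon>) (pa # us @ pb # rev vs) \<and> distinct (pa # us @ pb # rev vs)"
    using convex_polygon_of_boundary_chains[OF ci L M above below] by simp
  interpret acute_polygon_graph "- \<epsilon>" pa pb us vs E1
  proof
    show "E1 \<subseteq> set us \<times> set vs"
      using E1 by auto
    show "inner (v - u) (u' - u) > 0" if "(u, v) \<in> E1" "(u', v) \<in> E1" "u \<noteq> u'" for u u' v
      using that E1 by (intro locally_gabriel_inner_pos[OF lg]) (auto simp: insert_commute)
    show "inner (u - v) (v' - v) > 0" if "(u, v) \<in> E1" "(u, v') \<in> E1" "v \<noteq> v'" for u v v'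
      using that E1 by (intro locally_gabriel_inner_pos[OF lg]) auto
    show "inner (u - vs ! Suc j) (vs ! j - vs ! Suc j) > 0"
      if "(u, vs ! Suc j) \<in> E1" "Suc j < length vs" for u j
      using predecessor[OF that] by (rule inner_pos_if_angle3_lt_pi_half)
  qed (use polygon in simp_all)
  show ?thesis
    by (rule path_restricted_delete_max_edges)
qed

lemma boundary_chain_rev: "boundary_chain P L \<Longrightarrow> boundary_chain P (rev L)"
proof -
  have "hull_edge P a b \<Longrightarrow> hull_edge P b a" for a b
    unfolding hull_edge_def by metis
  then show "boundary_chain P L \<Longrightarrow> boundary_chain P (rev L)"
    unfolding boundary_chain_conv_successively by (auto elim: successively_mono)
qed

lemma angle_toward_predecessor:
  assumes "\<forall>i j. i < length us \<and> 1 \<le> j \<and> j \<le> length vs \<and> (us ! i, (pa # vs @ [pb]) ! j) \<in> F \<longrightarrow>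
      angle3 (us ! i) ((pa # vs @ [pb]) ! j) ((pa # vs @ [pb]) ! (j - 1)) < pi / 2"
    and "(u, vs ! Suc j) \<in> F" "u \<in> set us" "Suc j < length vs"
  shows "angle3 u (vs ! Suc j) (vs ! j) < pi / 2"
proof -
  obtain i where "i < length us" "us ! i = u"
    using assms(3) by (auto simp: in_set_conv_nth)
  then show ?thesis
    using assms(1)[rule_format, of i "Suc (Suc j)"] assms(2,4) by (simp add: nth_append)
qed

lemma angle_toward_successor_rev:
  assumes "\<forall>i j. i < length us \<and> 1 \<le> j \<and> j \<le> length vs \<and> (us ! i, (pa # vs @ [pb]) ! j) \<in> F \<longrightarrow>
      angle3 (us ! i) ((pa # vs @ [pb]) ! j) ((pa # vs @ [pb]) ! (j + 1)) < pi / 2"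
    and "(u, rev vs ! Suc j) \<in> F" "u \<in> set us" "Suc j < length vs"
  shows "angle3 u (rev vs ! Suc j) (rev vs ! j) < pi / 2"
proof -
  obtain i where "i < length us" "us ! i = u"
    using assms(3) by (auto simp: in_set_conv_nth)
  define k where "k = length vs - Suc (Suc j)"
  have "rev vs ! Suc j = vs ! k" "rev vs ! j = vs ! Suc k" "Suc k < length vs"
    using assms(4) unfolding k_def by (auto simp: rev_nth Suc_diff_Suc)
  with \<open>i < length us\<close> \<open>us ! i = u\<close> show ?thesis
    using assms(1)[rule_format, of i "Suc k"] assms(2) by (simp add: nth_append)
qed

lemma opposite_sides_sign:
  assumes "(set us = {q \<in> P. cross (pb - pa) (q - pa) > 0} \<and> set vs = {q \<in> P. cross (pb - pa) (q - pa) < 0}) \<or>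
    (set us = {q \<in> P. cross (pb - pa) (q - pa) < 0} \<and> set vs = {q \<in> P. cross (pb - pa) (q - pa) > 0})"
  obtains \<epsilon> :: real where "\<forall>q\<in>set us. \<epsilon> * orient pa pb q > 0" "\<forall>q\<in>set vs. \<epsilon> * orient pa pb q < 0"
  using assms
proof (elim disjE)
  assume "set us = {q \<in> P. cross (pb - pa) (q - pa) > 0} \<and> set vs = {q \<in> P. cross (pb - pa) (q - pa) < 0}"
  then show ?thesis
    by (intro that[of 1]) (auto simp: orient_def)
next
  assume "set us = {q \<in> P. cross (pb - pa) (q - pa) < 0} \<and> set vs = {q \<in> P. cross (pb - pa) (q - pa) > 0}"
  then show ?thesis
    by (intro that[of "-1"]) (auto simp: orient_def)
qed

theorem lemma2p2:
  fixes P :: "pt set" and E :: "pt set set" and p1 p2 :: pt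
    and us vs :: "pt list" and E1 :: "(pt \<times> pt) set"
  assumes "finite P"
    and "convexly_independent P"
    and "locally_gabriel P E"
    and "antipodal P p1 p2" and "p1 \<noteq> p2"
    and "(set us = {q \<in> P. cross (p2 - p1) (q - p1) > 0} \<and>
          set vs = {q \<in> P. cross (p2 - p1) (q - p1) < 0}) \<or>
         (set us = {q \<in> P. cross (p2 - p1) (q - p1) < 0} \<and>
          set vs = {q \<in> P. cross (p2 - p1) (q - p1) > 0})"
    and "boundary_chain P (p1 # us @ [p2])"
    and "boundary_chain P (p1 # vs @ [p2])"
    and "E1 \<subseteq> {(u, v). u \<in> set us \<and> v \<in> set vs \<and> {u, v} \<in> E}"
    and "\<forall>i j. i < length us \<and> 1 \<le> j \<and> j \<le> length vs \<and>
            (us ! i, (p1 # vs @ [p2]) ! j) \<in> E1 \<longrightarrow>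
            angle3 (us ! i) ((p1 # vs @ [p2]) ! j) ((p1 # vs @ [p2]) ! (j - 1)) < pi / 2"
    and "\<forall>i j. i < length us \<and> 1 \<le> j \<and> j \<le> length vs \<and>
            (us ! i, (p1 # vs @ [p2]) ! j) \<in>
               {(u, v). u \<in> set us \<and> v \<in> set vs \<and> {u, v} \<in> E} - E1 \<longrightarrow>
            angle3 (us ! i) ((p1 # vs @ [p2]) ! j) ((p1 # vs @ [p2]) ! (j + 1)) < pi / 2"
  shows "path_restricted (set us) (set vs) (list_less us) (list_less vs)
           (delete_max_edges (list_less us) E1)
       \<and> path_restricted (set us) (set vs) (\<lambda>a b. list_less us b a) (\<lambda>a b. list_less vs b a)
           (delete_max_edges (\<lambda>a b. list_less us b a)
              ({(u, v). u \<in> set us \<and> v \<in> set vs \<and> {u, v} \<in> E} - E1))"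
proof -
  define E' where "E' = {(u, v). u \<in> set us \<and> v \<in> set vs \<and> {u, v} \<in> E}"
  obtain \<epsilon> :: real where above: "\<forall>q\<in>set us. \<epsilon> * orient p1 p2 q > 0"
    and below: "\<forall>q\<in>set vs. \<epsilon> * orient p1 p2 q < 0"
    using opposite_sides_sign[OF assms(6)] by blast
  have "path_restricted (set us) (set vs) (list_less us) (list_less vs) (delete_max_edges (list_less us) E1)"
    using assms(9) angle_toward_predecessor[OF assms(10)]
    by (intro path_restricted_delete_max_edges_of_hull_chains[OF assms(2,3) above below assms(7,8)]) auto
  moreover have "path_restricted (set (rev us)) (set (rev vs)) (list_less (rev us)) (list_less (rev vs))
      (delete_max_edges (list_less (rev us)) (E' - E1))"
  proof (rule path_restricted_delete_max_edges_of_hull_chains[OF assms(2,3), where \<epsilon> = "- \<epsilon>" and pa = p2 and pb = p1])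
    show "\<forall>q\<in>set (rev us). - \<epsilon> * orient p2 p1 q > 0" "\<forall>q\<in>set (rev vs). - \<epsilon> * orient p2 p1 q < 0"
      using above below orient_swap[of p2 p1] by simp_all
    show "boundary_chain P (p2 # rev us @ [p1])" "boundary_chain P (p2 # rev vs @ [p1])"
      using boundary_chain_rev[OF assms(7)] boundary_chain_rev[OF assms(8)] by simp_all
    show "E' - E1 \<subseteq> {(u, v). u \<in> set (rev us) \<and> v \<in> set (rev vs) \<and> {u, v} \<in> E}"
      unfolding E'_def by auto
    show "angle3 u (rev vs ! Suc j) (rev vs ! j) < pi / 2"
      if "(u, rev vs ! Suc j) \<in> E' - E1" "Suc j < length (rev vs)" for u j
      using angle_toward_successor_rev[OF assms(11)[folded E'_def]] that unfolding E'_def by auto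
  qed
  moreover have "list_less (rev xs) = (\<lambda>a b. list_less xs b a)" for xs :: "pt list"
    by (simp add: fun_eq_iff list_less_rev)
  ultimately show ?thesis
    unfolding E'_def by simp
qed

end
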